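(* Let $E$ be a locally compact separable metric space, $Q(x,dy)$ a probability kernel on $(E,\mathcal{B}(E))$ with $Q(x,\{x\})=0$ for all $x\in E$, and $m_0$ a $\sigma$-finite measure fully supported on $E$ with $Q(x,dy)m_0(dx)=Q(y,dx)m_0(dy)$. Let $\lambda$ be a bounded Borel function on $E$ with $0<\lambda(x)<\infty$, and suppose $m(dx):=\lambda(x)^{-1}m_0(dx)$ is a Radon measure. Let $(\mathcal{E},\mathcal{F})$ be the Dirichlet form on $L^2(E,m)$ given by $\mathcal{F}=L^2(E,m)$ and $$\mathcal{E}(u,v)=\frac12\int_{E\times E}(u(x)-u(y))(v(x)-v(y))Q(x,dy)\lambda(x)m(dx)+\int_E u(x)v(x)(1-Q(x,E))\lambda(x)m(dx),$$ which is a regular Dirichlet form (associated with the pure jump step process with road map $Q$ and speed function $\lambda$). If $(\mathcal{E}',\mathcal{F}')$ is a regular Dirichlet subspace of $(\mathcal{E},\mathcal{F})$, then $(\mathcal{E}',\mathcal{F}')=(\mathcal{E},\mathcal{F})$.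
   Context: A regular Dirichlet subspace of a regular Dirichlet form $(\mathcal{E},\mathcal{F})$ on $L^2(E,m)$ is a regular Dirichlet form $(\mathcal{E}',\mathcal{F}')$ on $L^2(E,m)$ with $\mathcal{F}'\subset\mathcal{F}$ and $\mathcal{E}'(u,v)=\mathcal{E}(u,v)$ for all $u,v\in\mathcal{F}'$. *)

theory Defs
  imports "HOL-Probability.Probability"
begin

definition L2 :: "'a measure \<Rightarrow> ('a \<Rightarrow> real) set" where
  "L2 m = {u. u \<in> borel_measurable m \<and> integrable m (\<lambda>x. (u x)\<^sup>2)}"

definition Cc :: "('a::topological_space \<Rightarrow> real) set" where
  "Cc = {u. continuous_on UNIV u \<and> compact (closure {x. u x \<noteq> 0})}"

definition E1 :: "'a measure \<Rightarrow> (('a \<Rightarrow> real) \<Rightarrow> ('a \<Rightarrow> real) \<Rightarrow> real) \<Rightarrow> ('a \<Rightarrow> real) \<Rightarrow> real" where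
  "E1 m \<E> w = \<E> w w + (\<integral>x. (w x)\<^sup>2 \<partial>m)"

text \<open>Dirichlet form (\<E>,F) on L^2(E,m), F given as a set of representatives,
  saturated under m-a.e. equality (Fukushima--Oshima--Takeda).\<close>
definition dirichlet_form ::
  "'a measure \<Rightarrow> (('a \<Rightarrow> real) \<Rightarrow> ('a \<Rightarrow> real) \<Rightarrow> real) \<Rightarrow> ('a \<Rightarrow> real) set \<Rightarrow> bool" where
  "dirichlet_form m \<E> F \<longleftrightarrow>
     F \<subseteq> L2 m
   \<and> (\<forall>u\<in>F. \<forall>v\<in>L2 m. (AE x in m. u x = v x) \<longrightarrow> v \<in> F)
   \<and> (\<forall>u\<in>F. \<forall>v\<in>F. \<forall>w\<in>F. (AE x in m. u x = v x) \<longrightarrow> \<E> u w = \<E> v w)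
   \<comment> \<open>dense linear subspace of L^2\<close>
   \<and> (\<forall>u\<in>F. \<forall>v\<in>F. \<forall>a b::real. (\<lambda>x. a * u x + b * v x) \<in> F)
   \<and> (\<forall>f\<in>L2 m. \<forall>\<epsilon>>0. \<exists>u\<in>F. (\<integral>x. (f x - u x)\<^sup>2 \<partial>m) < \<epsilon>)
   \<comment> \<open>symmetric, bilinear, nonnegative definite\<close>
   \<and> (\<forall>u\<in>F. \<forall>v\<in>F. \<E> u v = \<E> v u)
   \<and> (\<forall>u\<in>F. \<forall>v\<in>F. \<forall>w\<in>F. \<forall>a b::real.
        \<E> (\<lambda>x. a * u x + b * v x) w = a * \<E> u w + b * \<E> v w)
   \<and> (\<forall>u\<in>F. \<E> u u \<ge> 0)
   \<comment> \<open>closed: (F, E_1) is complete\<close>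
   \<and> (\<forall>u::nat \<Rightarrow> 'a \<Rightarrow> real. (\<forall>n. u n \<in> F) \<longrightarrow>
        (\<forall>\<epsilon>>0. \<exists>N. \<forall>n\<ge>N. \<forall>k\<ge>N. E1 m \<E> (\<lambda>x. u n x - u k x) < \<epsilon>) \<longrightarrow>
        (\<exists>v\<in>F. (\<lambda>n. E1 m \<E> (\<lambda>x. u n x - v x)) \<longlonglongrightarrow> 0))
   \<comment> \<open>Markovian: the unit contraction operates on \<E>\<close>
   \<and> (\<forall>u\<in>F. (\<lambda>x. min 1 (max 0 (u x))) \<in> F \<and>
        \<E> (\<lambda>x. min 1 (max 0 (u x))) (\<lambda>x. min 1 (max 0 (u x))) \<le> \<E> u u)"

definition regular_dirichlet_form ::
  "'a::topological_space measure \<Rightarrow> (('a \<Rightarrow> real) \<Rightarrow> ('a \<Rightarrow> real) \<Rightarrow> real) \<Rightarrow> ('a \<Rightarrow> real) set \<Rightarrow> bool" where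
  "regular_dirichlet_form m \<E> F \<longleftrightarrow>
     dirichlet_form m \<E> F
   \<and> (\<forall>u\<in>F. \<forall>\<epsilon>>0. \<exists>g\<in>F \<inter> Cc. E1 m \<E> (\<lambda>x. u x - g x) < \<epsilon>)
   \<and> (\<forall>f\<in>Cc. \<forall>\<epsilon>>0. \<exists>g\<in>F \<inter> Cc. \<forall>x. \<bar>f x - g x\<bar> < \<epsilon>)"

definition regular_dirichlet_subspace ::
  "'a::topological_space measure \<Rightarrow> (('a \<Rightarrow> real) \<Rightarrow> ('a \<Rightarrow> real) \<Rightarrow> real) \<Rightarrow> ('a \<Rightarrow> real) set
   \<Rightarrow> (('a \<Rightarrow> real) \<Rightarrow> ('a \<Rightarrow> real) \<Rightarrow> real) \<Rightarrow> ('a \<Rightarrow> real) set \<Rightarrow> bool" where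
  "regular_dirichlet_subspace m \<E> F \<E>' F' \<longleftrightarrow>
     regular_dirichlet_form m \<E>' F' \<and> F' \<subseteq> F \<and> (\<forall>u\<in>F'. \<forall>v\<in>F'. \<E>' u v = \<E> u v)"

definition radon_measure :: "'a::topological_space measure \<Rightarrow> bool" where
  "radon_measure m \<longleftrightarrow> sets m = sets borel \<and> (\<forall>K. compact K \<longrightarrow> emeasure m K < \<infinity>)"

definition jump_form ::
  "'a measure \<Rightarrow> ('a \<Rightarrow> 'a measure) \<Rightarrow> ('a \<Rightarrow> real) \<Rightarrow> ('a \<Rightarrow> real) \<Rightarrow> ('a \<Rightarrow> real) \<Rightarrow> real" where
  "jump_form m Q lam u v =
     (1/2) * (\<integral>x. (\<integral>y. (u x - u y) * (v x - v y) \<partial>Q x) * lam x \<partial>m)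
     + (\<integral>x. u x * v x * (1 - measure (Q x) (space (Q x))) * lam x \<partial>m)"

end

theory Submission
  imports Defs
begin

text \<open>
  Symmetry of \<open>Q(x,dy) m\<^sub>0(dx)\<close> makes \<open>m\<^sub>0\<close> invariant under \<open>Q\<close>, so the jump energy of
  \<open>u\<close> is at most \<open>2 sup \<lambda> \<cdot> \<parallel>u\<parallel>\<^sup>2\<close> in \<open>L\<^sup>2(m)\<close>: the form is bounded. On a Dirichlet space
  whose energy is bounded, Cauchy sequences in \<open>L\<^sup>2\<close> are Cauchy for \<open>\<E>\<^sub>1\<close>; so closedness of
  \<open>(\<E>', F')\<close> makes \<open>F'\<close> closed in \<open>L\<^sup>2\<close>, and being dense it is all of \<open>L\<^sup>2\<close>.
\<close>

lemma nn_integral_density_inverse: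
  fixes lam :: "'a \<Rightarrow> real"
  assumes [measurable]: "lam \<in> borel_measurable N" "f \<in> borel_measurable N"
    and lam_pos: "\<And>x. lam x > 0"
  shows "(\<integral>\<^sup>+x. f x * ennreal (lam x) \<partial>density N (\<lambda>x. ennreal (1 / lam x))) = (\<integral>\<^sup>+x. f x \<partial>N)"
proof -
  have "ennreal (1 / lam x) * (f x * ennreal (lam x)) = f x" for x
    using lam_pos[of x] by (simp add: ennreal_mult[symmetric] mult.left_commute)
  then show ?thesis
    by (simp add: nn_integral_density)
qed

lemma prob_space_integral_square_diff_le:
  fixes w :: "'b \<Rightarrow> real"
  assumes N: "prob_space N" and [measurable]: "w \<in> borel_measurable N"
  shows "ennreal (\<integral>y. (a - w y)\<^sup>2 \<partial>N) \<le> 2 * ennreal (a\<^sup>2) + 2 * (\<integral>\<^sup>+y. ennreal ((w y)\<^sup>2) \<partial>N)"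
proof -
  have pointwise: "ennreal ((a - w y)\<^sup>2) \<le> ennreal (2 * a\<^sup>2) + 2 * ennreal ((w y)\<^sup>2)" for y
  proof -
    have "(a - w y)\<^sup>2 \<le> 2 * a\<^sup>2 + 2 * (w y)\<^sup>2"
      using zero_le_power2[of "a + w y"] by (simp add: power2_eq_square algebra_simps)
    then have "ennreal ((a - w y)\<^sup>2) \<le> ennreal (2 * a\<^sup>2 + 2 * (w y)\<^sup>2)"
      by (rule ennreal_leI)
    also have "\<dots> = ennreal (2 * a\<^sup>2) + 2 * ennreal ((w y)\<^sup>2)"
      by (simp add: ennreal_plus[symmetric] ennreal_mult'')
    finally show ?thesis .
  qed
  have "ennreal (\<integral>y. (a - w y)\<^sup>2 \<partial>N) \<le> (\<integral>\<^sup>+y. ennreal ((a - w y)\<^sup>2) \<partial>N)"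
    by (cases "integrable N (\<lambda>y. (a - w y)\<^sup>2)")
      (simp_all add: nn_integral_eq_integral not_integrable_integral_eq)
  also have "\<dots> \<le> (\<integral>\<^sup>+y. ennreal (2 * a\<^sup>2) + 2 * ennreal ((w y)\<^sup>2) \<partial>N)"
    by (intro nn_integral_mono pointwise)
  also have "\<dots> = 2 * ennreal (a\<^sup>2) + 2 * (\<integral>\<^sup>+y. ennreal ((w y)\<^sup>2) \<partial>N)"
    using prob_space.emeasure_space_1[OF N]
    by (simp add: nn_integral_add nn_integral_cmult ennreal_mult'')
  finally show ?thesis .
qed

locale reversible_kernel =
  fixes Q :: "'a::topological_space \<Rightarrow> 'a measure" and m0 :: "'a measure"
  assumes Q_prob: "\<And>x. prob_space (Q x)"
    and Q_sets: "\<And>x. sets (Q x) = sets borel"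
    and Q_meas: "\<And>A. A \<in> sets borel \<Longrightarrow> (\<lambda>x. emeasure (Q x) A) \<in> borel_measurable borel"
    and m0_sets: "sets m0 = sets borel"
    and Q_sym: "\<And>C. C \<in> sets (borel \<Otimes>\<^sub>M borel) \<Longrightarrow>
        (\<integral>\<^sup>+x. (\<integral>\<^sup>+y. indicator C (x, y) \<partial>Q x) \<partial>m0)
      = (\<integral>\<^sup>+y. (\<integral>\<^sup>+x. indicator C (x, y) \<partial>Q y) \<partial>m0)"
begin

lemma space_m0: "space m0 = UNIV"
  using sets_eq_imp_space_eq[OF m0_sets] by simp

lemma measurable_kernel: "Q \<in> measurable m0 (subprob_algebra borel)"
proof -
  have "Q \<in> measurable borel (subprob_algebra borel)"
    by (auto intro!: measurable_subprob_algebra simp: prob_space_imp_subprob_space Q_prob Q_sets Q_meas)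
  then show ?thesis
    using measurable_cong_sets[OF m0_sets refl] by blast
qed

lemma bind_eq: "m0 \<bind> Q = m0"
proof (rule measure_eqI)
  show sets_bind: "sets (m0 \<bind> Q) = sets m0"
    using sets_bind_measurable[OF measurable_kernel] space_m0 m0_sets by simp
  fix A assume "A \<in> sets (m0 \<bind> Q)"
  then have A: "A \<in> sets borel" using sets_bind m0_sets by simp
  have cylinder: "(\<lambda>y. indicator (UNIV \<times> A) (x, y) :: ennreal) = indicator A" for x
    by (auto simp: indicator_def)
  have "emeasure (m0 \<bind> Q) A = (\<integral>\<^sup>+x. emeasure (Q x) A \<partial>m0)"
    using emeasure_bind[OF _ measurable_kernel A] space_m0 by simp
  also have "\<dots> = (\<integral>\<^sup>+x. (\<integral>\<^sup>+y. indicator (UNIV \<times> A) (x, y) \<partial>Q x) \<partial>m0)"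
    using A Q_sets by (simp add: cylinder)
  also have "\<dots> = (\<integral>\<^sup>+y. (\<integral>\<^sup>+x. indicator (UNIV \<times> A) (x, y) \<partial>Q y) \<partial>m0)"
    using A by (intro Q_sym) auto
  also have "\<dots> = (\<integral>\<^sup>+y. indicator A y \<partial>m0)"
    using prob_space.emeasure_space_1[OF Q_prob] by (simp add: indicator_def)
  also have "\<dots> = emeasure m0 A"
    using A m0_sets by simp
  finally show "emeasure (m0 \<bind> Q) A = emeasure m0 A" .
qed

lemma nn_integral_kernel:
  assumes "h \<in> borel_measurable borel"
  shows "(\<integral>\<^sup>+x. \<integral>\<^sup>+y. h y \<partial>Q x \<partial>m0) = (\<integral>\<^sup>+x. h x \<partial>m0)"
  using nn_integral_bind[OF assms measurable_kernel] bind_eq by simp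

lemma nn_integral_jump_energy_le:
  fixes lam w :: "'a \<Rightarrow> real"
  defines "M \<equiv> density m0 (\<lambda>x. ennreal (1 / lam x))"
  assumes lam_meas: "lam \<in> borel_measurable borel"
    and lam_pos: "\<And>x. lam x > 0"
    and lam_le: "\<And>x. lam x \<le> B"
    and w: "w \<in> L2 M"
  shows "(\<integral>\<^sup>+x. ennreal ((\<integral>y. (w x - w y)\<^sup>2 \<partial>Q x) * lam x) \<partial>M)
    \<le> ennreal (4 * B * (\<integral>x. (w x)\<^sup>2 \<partial>M))"
proof -
  define K where "K x = (\<integral>\<^sup>+y. ennreal ((w y)\<^sup>2) \<partial>Q x)" for x
  have B_nonneg: "0 \<le> B" using lam_le[of undefined] lam_pos[of undefined] by simp
  have M_sets: "sets M = sets borel" unfolding M_def using m0_sets by simp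
  have w_borel[measurable]: "w \<in> borel_measurable borel"
    using w measurable_cong_sets[OF M_sets refl] unfolding L2_def by blast
  have [measurable]: "lam \<in> borel_measurable m0" "w \<in> borel_measurable m0"
    using lam_meas w_borel by (simp_all add: measurable_cong_sets[OF m0_sets refl])
  have w2_borel: "(\<lambda>y. ennreal ((w y)\<^sup>2)) \<in> borel_measurable borel"
    by measurable
  have [measurable]: "K \<in> borel_measurable m0"
    unfolding K_def
    by (rule measurable_compose[OF measurable_kernel nn_integral_measurable_subprob_algebra]) measurable
  have "ennreal ((\<integral>y. (w x - w y)\<^sup>2 \<partial>Q x) * lam x)
      \<le> (2 * ennreal ((w x)\<^sup>2) + 2 * K x) * ennreal (lam x)" for x
  proof -
    have "ennreal (\<integral>y. (w x - w y)\<^sup>2 \<partial>Q x) \<le> 2 * ennreal ((w x)\<^sup>2) + 2 * K x"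
      unfolding K_def
      by (rule prob_space_integral_square_diff_le[OF Q_prob])
        (simp add: measurable_cong_sets[OF Q_sets refl] w_borel)
    then show ?thesis
      using lam_pos[of x] by (simp add: ennreal_mult mult_right_mono)
  qed
  then have "(\<integral>\<^sup>+x. ennreal ((\<integral>y. (w x - w y)\<^sup>2 \<partial>Q x) * lam x) \<partial>M)
      \<le> (\<integral>\<^sup>+x. (2 * ennreal ((w x)\<^sup>2) + 2 * K x) * ennreal (lam x) \<partial>M)"
    by (rule nn_integral_mono)
  also have "\<dots> = 2 * (\<integral>\<^sup>+x. ennreal ((w x)\<^sup>2) \<partial>m0) + 2 * (\<integral>\<^sup>+x. K x \<partial>m0)"
    unfolding M_def by (simp add: nn_integral_density_inverse lam_pos nn_integral_add nn_integral_cmult)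
  also have "\<dots> = 4 * (\<integral>\<^sup>+x. ennreal ((w x)\<^sup>2) * ennreal (lam x) \<partial>M)"
    unfolding K_def nn_integral_kernel[of "\<lambda>y. ennreal ((w y)\<^sup>2)", OF w2_borel] M_def
    by (simp add: nn_integral_density_inverse lam_pos flip: distrib_right)
  also have "\<dots> \<le> 4 * (\<integral>\<^sup>+x. ennreal ((w x)\<^sup>2) * ennreal B \<partial>M)"
    by (intro mult_left_mono nn_integral_mono mult_left_mono ennreal_leI lam_le) simp_all
  also have "(\<integral>\<^sup>+x. ennreal ((w x)\<^sup>2) * ennreal B \<partial>M) = ennreal (\<integral>x. (w x)\<^sup>2 \<partial>M) * ennreal B"
    using w unfolding L2_def by (subst nn_integral_multc) (auto simp: nn_integral_eq_integral)
  finally show ?thesis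
    using B_nonneg by (simp add: ennreal_mult'' ennreal_mult mult_ac)
qed

lemma jump_form_le_L2_norm:
  fixes lam w :: "'a \<Rightarrow> real"
  defines "M \<equiv> density m0 (\<lambda>x. ennreal (1 / lam x))"
  assumes lam_meas: "lam \<in> borel_measurable borel"
    and lam_pos: "\<And>x. lam x > 0"
    and lam_le: "\<And>x. lam x \<le> B"
    and w: "w \<in> L2 M"
  shows "jump_form M Q lam w w \<le> 2 * B * (\<integral>x. (w x)\<^sup>2 \<partial>M)"
proof -
  have "0 \<le> B" using lam_le[of undefined] lam_pos[of undefined] by simp
  then have "(\<integral>x. (\<integral>y. (w x - w y)\<^sup>2 \<partial>Q x) * lam x \<partial>M) \<le> 4 * B * (\<integral>x. (w x)\<^sup>2 \<partial>M)"
    using nn_integral_jump_energy_le[OF lam_meas lam_pos lam_le w[unfolded M_def]]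
    unfolding M_def by (intro integral_real_bounded) auto
  moreover have "jump_form M Q lam w w = (1/2) * (\<integral>x. (\<integral>y. (w x - w y)\<^sup>2 \<partial>Q x) * lam x \<partial>M)"
    using prob_space.prob_space[OF Q_prob]
    by (simp add: jump_form_def power2_eq_square)
  ultimately show ?thesis
    by simp
qed

end


lemma L2_integrable_square_diff:
  assumes "u \<in> L2 M" "v \<in> L2 M"
  shows "integrable M (\<lambda>x. (u x - v x)\<^sup>2)"
proof (rule Bochner_Integration.integrable_bound)
  show "integrable M (\<lambda>x. 2 * (u x)\<^sup>2 + 2 * (v x)\<^sup>2)"
    using assms unfolding L2_def by auto
  show "(\<lambda>x. (u x - v x)\<^sup>2) \<in> borel_measurable M"
    using assms unfolding L2_def by auto
  have "(u x - v x)\<^sup>2 \<le> 2 * (u x)\<^sup>2 + 2 * (v x)\<^sup>2" for x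
    using zero_le_power2[of "u x + v x"] by (simp add: power2_eq_square algebra_simps)
  then show "AE x in M. norm ((u x - v x)\<^sup>2) \<le> norm (2 * (u x)\<^sup>2 + 2 * (v x)\<^sup>2)"
    by simp
qed

lemma L2_dist_triangle:
  assumes "u \<in> L2 M" "v \<in> L2 M" "w \<in> L2 M"
  shows "(\<integral>x. (u x - w x)\<^sup>2 \<partial>M) \<le> 2 * (\<integral>x. (u x - v x)\<^sup>2 \<partial>M) + 2 * (\<integral>x. (v x - w x)\<^sup>2 \<partial>M)"
proof -
  have "(u x - w x)\<^sup>2 \<le> 2 * (u x - v x)\<^sup>2 + 2 * (v x - w x)\<^sup>2" for x
    using zero_le_power2[of "u x - 2 * v x + w x"] by (simp add: power2_eq_square algebra_simps)
  then have "(\<integral>x. (u x - w x)\<^sup>2 \<partial>M) \<le> (\<integral>x. 2 * (u x - v x)\<^sup>2 + 2 * (v x - w x)\<^sup>2 \<partial>M)"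
    using assms by (intro integral_mono) (simp_all add: L2_integrable_square_diff)
  also have "\<dots> = 2 * (\<integral>x. (u x - v x)\<^sup>2 \<partial>M) + 2 * (\<integral>x. (v x - w x)\<^sup>2 \<partial>M)"
    using assms by (simp add: L2_integrable_square_diff)
  finally show ?thesis .
qed

lemma L2_Cauchy_if_tendsto:
  assumes f: "f \<in> L2 M" and u: "\<And>n. u n \<in> L2 M"
    and lim: "(\<lambda>n. \<integral>x. (f x - u n x)\<^sup>2 \<partial>M) \<longlonglongrightarrow> 0"
  shows "\<forall>\<epsilon>>0. \<exists>N. \<forall>n\<ge>N. \<forall>k\<ge>N. (\<integral>x. (u n x - u k x)\<^sup>2 \<partial>M) < \<epsilon>"
proof (intro allI impI)
  fix \<epsilon> :: real assume "\<epsilon> > 0"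
  obtain N where N: "\<And>n. n \<ge> N \<Longrightarrow> (\<integral>x. (f x - u n x)\<^sup>2 \<partial>M) < \<epsilon> / 4"
    using order_tendstoD(2)[OF lim, of "\<epsilon> / 4"] \<open>\<epsilon> > 0\<close> by (auto simp: eventually_sequentially)
  have "(\<integral>x. (u n x - u k x)\<^sup>2 \<partial>M) < \<epsilon>" if "n \<ge> N" "k \<ge> N" for n k
  proof -
    have "(\<integral>x. (u n x - u k x)\<^sup>2 \<partial>M)
        \<le> 2 * (\<integral>x. (u n x - f x)\<^sup>2 \<partial>M) + 2 * (\<integral>x. (f x - u k x)\<^sup>2 \<partial>M)"
      by (rule L2_dist_triangle[OF u f u])
    also have "\<dots> = 2 * (\<integral>x. (f x - u n x)\<^sup>2 \<partial>M) + 2 * (\<integral>x. (f x - u k x)\<^sup>2 \<partial>M)"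
      by (simp add: power2_commute)
    also have "\<dots> < \<epsilon>"
      using N[OF \<open>n \<ge> N\<close>] N[OF \<open>k \<ge> N\<close>] by simp
    finally show ?thesis .
  qed
  then show "\<exists>N. \<forall>n\<ge>N. \<forall>k\<ge>N. (\<integral>x. (u n x - u k x)\<^sup>2 \<partial>M) < \<epsilon>" by blast
qed

lemma L2_tendsto_unique_AE:
  assumes f: "f \<in> L2 M" and g: "g \<in> L2 M" and u: "\<And>n. u n \<in> L2 M"
    and f_lim: "(\<lambda>n. \<integral>x. (f x - u n x)\<^sup>2 \<partial>M) \<longlonglongrightarrow> 0"
    and g_lim: "(\<lambda>n. \<integral>x. (u n x - g x)\<^sup>2 \<partial>M) \<longlonglongrightarrow> 0"
  shows "AE x in M. f x = g x"
proof -
  have "(\<lambda>n. 2 * (\<integral>x. (f x - u n x)\<^sup>2 \<partial>M) + 2 * (\<integral>x. (u n x - g x)\<^sup>2 \<partial>M)) \<longlonglongrightarrow> 0"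
    using tendsto_add[OF tendsto_mult_left[OF f_lim] tendsto_mult_left[OF g_lim], of 2 2] by simp
  then have "(\<integral>x. (f x - g x)\<^sup>2 \<partial>M) \<le> 0"
    using L2_dist_triangle[OF f u g] by (intro LIMSEQ_le_const) auto
  then have "(\<integral>x. (f x - g x)\<^sup>2 \<partial>M) = 0"
    by (simp add: antisym)
  then have "AE x in M. (f x - g x)\<^sup>2 = 0"
    using integral_nonneg_eq_0_iff_AE[OF L2_integrable_square_diff[OF f g]] by simp
  then show ?thesis
    by (auto elim: AE_mp)
qed

lemma E1_le_L2_norm_if_energy_bounded:
  assumes "\<E> u u \<le> C * (\<integral>x. (u x)\<^sup>2 \<partial>M)"
  shows "E1 M \<E> u \<le> (\<bar>C\<bar> + 1) * (\<integral>x. (u x)\<^sup>2 \<partial>M)"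
proof -
  have "C * (\<integral>x. (u x)\<^sup>2 \<partial>M) \<le> \<bar>C\<bar> * (\<integral>x. (u x)\<^sup>2 \<partial>M)"
    by (intro mult_right_mono) auto
  then show ?thesis
    using assms unfolding E1_def by (simp add: distrib_right)
qed

lemma E1_Cauchy_if_L2_Cauchy:
  assumes bound: "\<And>n k. \<E> (\<lambda>x. u n x - u k x) (\<lambda>x. u n x - u k x)
      \<le> C * (\<integral>x. (u n x - u k x)\<^sup>2 \<partial>M)"
    and Cauchy: "\<forall>\<epsilon>>0. \<exists>N. \<forall>n\<ge>N. \<forall>k\<ge>N. (\<integral>x. (u n x - u k x)\<^sup>2 \<partial>M) < \<epsilon>"
  shows "\<forall>\<epsilon>>0. \<exists>N. \<forall>n\<ge>N. \<forall>k\<ge>N. E1 M \<E> (\<lambda>x. u n x - u k x) < \<epsilon>"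
proof (intro allI impI)
  fix \<epsilon> :: real assume "\<epsilon> > 0"
  have C_pos: "\<bar>C\<bar> + 1 > 0"
    using abs_ge_zero[of C] by linarith
  have "\<epsilon> / (\<bar>C\<bar> + 1) > 0"
    using \<open>\<epsilon> > 0\<close> C_pos by (rule divide_pos_pos)
  from Cauchy[rule_format, OF this]
  obtain N where N: "\<forall>n\<ge>N. \<forall>k\<ge>N. (\<integral>x. (u n x - u k x)\<^sup>2 \<partial>M) < \<epsilon> / (\<bar>C\<bar> + 1)" ..
  have "E1 M \<E> (\<lambda>x. u n x - u k x) < \<epsilon>" if "n \<ge> N" "k \<ge> N" for n k
  proof -
    have "E1 M \<E> (\<lambda>x. u n x - u k x) \<le> (\<bar>C\<bar> + 1) * (\<integral>x. (u n x - u k x)\<^sup>2 \<partial>M)"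
      by (rule E1_le_L2_norm_if_energy_bounded[of \<E>, OF bound])
    also have "\<dots> < \<epsilon>"
      using N[rule_format, OF that] C_pos by (simp add: pos_less_divide_eq mult.commute)
    finally show ?thesis .
  qed
  then show "\<exists>N. \<forall>n\<ge>N. \<forall>k\<ge>N. E1 M \<E> (\<lambda>x. u n x - u k x) < \<epsilon>" by blast
qed

lemma dirichlet_formD:
  assumes "dirichlet_form M \<E> F"
  shows "F \<subseteq> L2 M"
    and "u \<in> F \<Longrightarrow> v \<in> L2 M \<Longrightarrow> (AE x in M. u x = v x) \<Longrightarrow> v \<in> F"
    and "u \<in> F \<Longrightarrow> v \<in> F \<Longrightarrow> (\<lambda>x. u x - v x) \<in> F"
    and "f \<in> L2 M \<Longrightarrow> \<epsilon> > 0 \<Longrightarrow> \<exists>u\<in>F. (\<integral>x. (f x - u x)\<^sup>2 \<partial>M) < \<epsilon>"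
    and "u \<in> F \<Longrightarrow> \<E> u u \<ge> 0"
    and "\<forall>n. w n \<in> F \<Longrightarrow>
        \<forall>\<epsilon>>0. \<exists>N. \<forall>n\<ge>N. \<forall>k\<ge>N. E1 M \<E> (\<lambda>x. w n x - w k x) < \<epsilon> \<Longrightarrow>
        \<exists>v\<in>F. (\<lambda>n. E1 M \<E> (\<lambda>x. w n x - v x)) \<longlonglongrightarrow> 0"
proof -
  note df = assms[unfolded dirichlet_form_def]
  note saturated = df[THEN conjunct2, THEN conjunct1]
    and linear = df[THEN conjunct2, THEN conjunct2, THEN conjunct2, THEN conjunct1]
    and dense = df[THEN conjunct2, THEN conjunct2, THEN conjunct2, THEN conjunct2, THEN conjunct1]
    and nonneg = df[THEN conjunct2, THEN conjunct2, THEN conjunct2, THEN conjunct2, THEN conjunct2,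
      THEN conjunct2, THEN conjunct2, THEN conjunct1]
    and closed = df[THEN conjunct2, THEN conjunct2, THEN conjunct2, THEN conjunct2, THEN conjunct2,
      THEN conjunct2, THEN conjunct2, THEN conjunct2, THEN conjunct1]
  show "F \<subseteq> L2 M"
    using df by (rule conjunct1)
  show "u \<in> F \<Longrightarrow> v \<in> L2 M \<Longrightarrow> (AE x in M. u x = v x) \<Longrightarrow> v \<in> F"
    using saturated by blast
  show "u \<in> F \<Longrightarrow> v \<in> F \<Longrightarrow> (\<lambda>x. u x - v x) \<in> F"
    using linear[rule_format, of u v 1 "-1"] by simp
  show "f \<in> L2 M \<Longrightarrow> \<epsilon> > 0 \<Longrightarrow> \<exists>u\<in>F. (\<integral>x. (f x - u x)\<^sup>2 \<partial>M) < \<epsilon>"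
    using dense by blast
  show "u \<in> F \<Longrightarrow> \<E> u u \<ge> 0"
    using nonneg by blast
  show "\<forall>n. w n \<in> F \<Longrightarrow>
        \<forall>\<epsilon>>0. \<exists>N. \<forall>n\<ge>N. \<forall>k\<ge>N. E1 M \<E> (\<lambda>x. w n x - w k x) < \<epsilon> \<Longrightarrow>
        \<exists>v\<in>F. (\<lambda>n. E1 M \<E> (\<lambda>x. w n x - v x)) \<longlonglongrightarrow> 0"
    using closed by blast
qed

lemma L2_subset_dirichlet_form_if_energy_bounded:
  assumes df: "dirichlet_form M \<E> F"
    and bound: "\<And>u. u \<in> F \<Longrightarrow> \<E> u u \<le> C * (\<integral>x. (u x)\<^sup>2 \<partial>M)"
  shows "L2 M \<subseteq> F"
proof
  note F_L2 = dirichlet_formD(1)[OF df] and saturated = dirichlet_formD(2)[OF df]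
    and diff = dirichlet_formD(3)[OF df] and dense = dirichlet_formD(4)[OF df]
    and nonneg = dirichlet_formD(5)[OF df] and closed = dirichlet_formD(6)[OF df]
  fix f assume f: "f \<in> L2 M"
  have "\<forall>n. \<exists>v\<in>F. (\<integral>x. (f x - v x)\<^sup>2 \<partial>M) < 1 / Suc n"
    using dense[OF f] by simp
  then obtain u where uF: "\<And>n. u n \<in> F" and u_dist: "\<And>n. (\<integral>x. (f x - u n x)\<^sup>2 \<partial>M) < 1 / Suc n"
    by metis
  have uL2: "u n \<in> L2 M" for n
    using uF F_L2 by blast
  have u_lim: "(\<lambda>n. \<integral>x. (f x - u n x)\<^sup>2 \<partial>M) \<longlonglongrightarrow> 0"
  proof (rule tendsto_sandwich[OF _ _ tendsto_const LIMSEQ_Suc[OF lim_const_over_n[of 1]]])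
    show "\<forall>\<^sub>F n in sequentially. (\<integral>x. (f x - u n x)\<^sup>2 \<partial>M) \<le> 1 / real (Suc n)"
      using u_dist by (intro always_eventually allI less_imp_le) simp
  qed simp
  have "\<forall>\<epsilon>>0. \<exists>N. \<forall>n\<ge>N. \<forall>k\<ge>N. E1 M \<E> (\<lambda>x. u n x - u k x) < \<epsilon>"
  proof (rule E1_Cauchy_if_L2_Cauchy)
    show "\<E> (\<lambda>x. u n x - u k x) (\<lambda>x. u n x - u k x) \<le> C * (\<integral>x. (u n x - u k x)\<^sup>2 \<partial>M)" for n k
      by (intro bound diff uF)
  qed (rule L2_Cauchy_if_tendsto[OF f uL2 u_lim])
  then obtain v where vF: "v \<in> F" and v_lim: "(\<lambda>n. E1 M \<E> (\<lambda>x. u n x - v x)) \<longlonglongrightarrow> 0"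
    using closed[of u] uF by blast
  have "(\<lambda>n. \<integral>x. (u n x - v x)\<^sup>2 \<partial>M) \<longlonglongrightarrow> 0"
    using nonneg[OF diff[OF uF vF]]
    by (intro tendsto_sandwich[OF _ _ tendsto_const v_lim]) (auto simp: E1_def)
  then have "AE x in M. f x = v x"
    using vF F_L2 by (intro L2_tendsto_unique_AE[OF f _ uL2 u_lim]) auto
  then have "AE x in M. v x = f x"
    by (simp add: eq_commute)
  then show "f \<in> F"
    by (rule saturated[OF vF f])
qed

theorem proposition4p1:
  fixes Q :: "'a::{metric_space, second_countable_topology} \<Rightarrow> 'a measure"
    and m0 :: "'a measure"
    and lam :: "'a \<Rightarrow> real"
    and \<E>' :: "('a \<Rightarrow> real) \<Rightarrow> ('a \<Rightarrow> real) \<Rightarrow> real"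
    and F' :: "('a \<Rightarrow> real) set"
  assumes loc_compact: "locally compact (UNIV :: 'a set)"
    and Q_prob: "\<And>x. prob_space (Q x)"
    and Q_sets: "\<And>x. sets (Q x) = sets borel"
    and Q_meas: "\<And>A. A \<in> sets borel \<Longrightarrow> (\<lambda>x. emeasure (Q x) A) \<in> borel_measurable borel"
    and Q_diag: "\<And>x. emeasure (Q x) {x} = 0"
    and m0_sets: "sets m0 = sets borel"
    and m0_sigma: "sigma_finite_measure m0"
    and m0_support: "\<And>U. open U \<Longrightarrow> U \<noteq> {} \<Longrightarrow> emeasure m0 U > 0"
    and Q_sym: "\<And>C. C \<in> sets (borel \<Otimes>\<^sub>M borel) \<Longrightarrow>
        (\<integral>\<^sup>+x. (\<integral>\<^sup>+y. indicator C (x, y) \<partial>Q x) \<partial>m0)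
      = (\<integral>\<^sup>+y. (\<integral>\<^sup>+x. indicator C (x, y) \<partial>Q y) \<partial>m0)"
    and lam_meas: "lam \<in> borel_measurable borel"
    and lam_bdd: "bounded (range lam)"
    and lam_pos: "\<And>x. lam x > 0"
    and m_radon: "radon_measure (density m0 (\<lambda>x. ennreal (1 / lam x)))"
    and E_regular: "regular_dirichlet_form (density m0 (\<lambda>x. ennreal (1 / lam x)))
        (jump_form (density m0 (\<lambda>x. ennreal (1 / lam x))) Q lam)
        (L2 (density m0 (\<lambda>x. ennreal (1 / lam x))))"
    and sub: "regular_dirichlet_subspace (density m0 (\<lambda>x. ennreal (1 / lam x)))
        (jump_form (density m0 (\<lambda>x. ennreal (1 / lam x))) Q lam)
        (L2 (density m0 (\<lambda>x. ennreal (1 / lam x)))) \<E>' F'"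
  shows "F' = L2 (density m0 (\<lambda>x. ennreal (1 / lam x)))
    \<and> (\<forall>u\<in>F'. \<forall>v\<in>F'. \<E>' u v = jump_form (density m0 (\<lambda>x. ennreal (1 / lam x))) Q lam u v)"
proof -
  define M where "M = density m0 (\<lambda>x. ennreal (1 / lam x))"
  note kernel = reversible_kernel.intro[OF Q_prob Q_sets Q_meas m0_sets Q_sym]
  obtain B where lam_le: "\<And>x. lam x \<le> B"
    using lam_bdd by (auto simp: bounded_iff dest: abs_le_D1)
  have df: "dirichlet_form M \<E>' F'" and F'_L2: "F' \<subseteq> L2 M"
    and energy_eq: "\<forall>u\<in>F'. \<forall>v\<in>F'. \<E>' u v = jump_form M Q lam u v"
    using sub unfolding M_def regular_dirichlet_subspace_def regular_dirichlet_form_def by auto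
  have "\<E>' u u \<le> 2 * B * (\<integral>x. (u x)\<^sup>2 \<partial>M)" if "u \<in> F'" for u
    using reversible_kernel.jump_form_le_L2_norm[OF kernel lam_meas lam_pos lam_le, of u]
      that F'_L2 energy_eq
    unfolding M_def by auto
  then have "L2 M \<subseteq> F'"
    by (rule L2_subset_dirichlet_form_if_energy_bounded[OF df])
  then show ?thesis
    using F'_L2 energy_eq unfolding M_def by blast
qed

end
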